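(* Let $\mathcal C\subset\mathbb R^2$ be an open double cone with apex $z\in\mathbb R^2$ and angle $\mathcal A\in(0,\pi)$. Then, with $\gamma_2=\mathcal N(0,I_{2\times2})$ the standard Gaussian distribution on $\mathbb R^2$, \[ \gamma_2(\mathcal C)\ge\frac{\mathcal A}{2\pi}e^{-\|z\|^2}. \]
   Context: A set $\mathcal C\subset\mathbb R^2$ is an open double cone with apex $z$ if $\mathcal C=\{z+au+bv:(a,b)\in(0,\infty)^2\cup(-\infty,0)^2\}$ for some linearly independent $u,v\in\mathbb R^2$; its angle is $\angle(u,v)=\arccos(\langle u,v\rangle/(\|u\|\|v\|))\in(0,\pi)$, which does not depend on the choice of $(u,v)$ representing $\mathcal C$. *)

theory Defs
  imports "HOL-Analysis.Analysis"
begin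

definition double_cone :: "real^2 \<Rightarrow> real^2 \<Rightarrow> real^2 \<Rightarrow> (real^2) set" where
  "double_cone z u v = {z + a *\<^sub>R u + b *\<^sub>R v | a b.
      (a > 0 \<and> b > 0) \<or> (a < 0 \<and> b < 0)}"

definition vec_angle :: "real^2 \<Rightarrow> real^2 \<Rightarrow> real" where
  "vec_angle u v = arccos ((u \<bullet> v) / (norm u * norm v))"

definition gauss2 :: "(real^2) measure" where
  "gauss2 = density lborel (\<lambda>x. ennreal (exp (- (norm x)\<^sup>2 / 2) / (2 * pi)))"

end

theory Submission
  imports Defs "HOL-Probability.Distributions"
begin

text \<open>
  Since \<open>\<parallel>x\<parallel>\<^sup>2 \<le> 2\<parallel>z\<parallel>\<^sup>2 + 2\<parallel>x - z\<parallel>\<^sup>2\<close>, the Gaussian density is at least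
  \<open>exp (-\<parallel>z\<parallel>\<^sup>2) / (2\<pi>) \<cdot> exp (-\<parallel>x - z\<parallel>\<^sup>2)\<close>, so it suffices to show that
  \<open>exp (-\<parallel>x - z\<parallel>\<^sup>2)\<close> integrates to the angle \<open>A\<close> over the cone.
  Parametrise the cone by \<open>z + \<rho>(s) w(t)\<close> with \<open>s \<in> (0, 1)\<close>, where \<open>w(t)\<close> runs through the
  unit directions of the cone for \<open>t \<in> (0, A) \<union> (\<pi>, \<pi> + A)\<close> and \<open>\<rho>(s) = \<surd>(-ln (1 - s))\<close>.
  The Jacobian \<open>\<rho>(s) \<rho>'(s) = 1 / (2 (1 - s))\<close> times the weight \<open>exp (-\<rho>(s)\<^sup>2) = 1 - s\<close> is the
  constant \<open>1/2\<close>, so the integral is half the area \<open>2A\<close> of the parameter domain.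
\<close>

definition cross2 :: "real^2 \<Rightarrow> real^2 \<Rightarrow> real" where
  "cross2 x y = x$1 * y$2 - x$2 * y$1"

lemma cross2_scaleR: "cross2 (a *\<^sub>R x) (b *\<^sub>R y) = a * b * cross2 x y"
  unfolding cross2_def by (simp add: algebra_simps)

lemma cross2_scaleR_add:
  "cross2 (a *\<^sub>R u + b *\<^sub>R v) (c *\<^sub>R u + d *\<^sub>R v) = (a * d - b * c) * cross2 u v"
  unfolding cross2_def by (simp add: algebra_simps)

lemma cross2_scaleR_add_right: "cross2 (a *\<^sub>R u + b *\<^sub>R v) v = a * cross2 u v"
  and cross2_scaleR_add_left: "cross2 u (a *\<^sub>R u + b *\<^sub>R v) = b * cross2 u v"
  unfolding cross2_def by (simp_all add: algebra_simps)

lemma cross2_sq_add_inner_sq: "(cross2 x y)\<^sup>2 + (x \<bullet> y)\<^sup>2 = (norm x)\<^sup>2 * (norm y)\<^sup>2"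
  unfolding cross2_def power2_norm_eq_inner inner_vec_def sum_2 inner_real_def by algebra

lemma det_matrix_columns_2:
  "det (matrix (\<lambda>h::real^2. h$1 *\<^sub>R x + h$2 *\<^sub>R y)) = cross2 x y"
  by (simp add: det_2 matrix_def cross2_def axis_def)

lemma cross2_nonzero_if_independent:
  assumes "independent {u, v}" "u \<noteq> v"
  shows "cross2 u v \<noteq> 0"
proof
  assume cross: "cross2 u v = 0"
  have "v \<noteq> 0" "u \<notin> span {v}"
    using assms by (auto simp: independent_insert)
  then obtain i where i: "v$i \<noteq> 0" by (auto simp: vec_eq_iff)
  have "u = (u$i / v$i) *\<^sub>R v"
    using cross i exhaust_2[of i] unfolding cross2_def
    by (auto simp: vec_eq_iff forall_2 field_simps)
  then have "u \<in> span {v}" by (metis span_base span_scale singletonI)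
  with \<open>u \<notin> span {v}\<close> show False ..
qed

lemma abs_inner_div_norms_le_1: "\<bar>(u \<bullet> v) / (norm u * norm v)\<bar> \<le> 1"
proof (cases "u = 0 \<or> v = 0")
  case False
  then show ?thesis by (simp add: abs_divide divide_le_eq_1 Cauchy_Schwarz_ineq2)
qed auto

lemma vec_angle_range: "0 \<le> vec_angle u v" "vec_angle u v \<le> pi"
proof -
  have "-1 \<le> (u \<bullet> v) / (norm u * norm v)" "(u \<bullet> v) / (norm u * norm v) \<le> 1"
    using abs_inner_div_norms_le_1[of u v] by linarith+
  then show "0 \<le> vec_angle u v" "vec_angle u v \<le> pi"
    unfolding vec_angle_def by (simp_all add: arccos_lbound arccos_ubound)
qed

lemma vec_angle_cos:
  assumes "u \<noteq> 0" "v \<noteq> 0"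
  shows "norm u * norm v * cos (vec_angle u v) = u \<bullet> v"
  using assms unfolding vec_angle_def cos_arccos_abs[OF abs_inner_div_norms_le_1] by simp

lemma abs_cross2_eq_sin_vec_angle:
  assumes "u \<noteq> 0" "v \<noteq> 0"
  shows "\<bar>cross2 u v\<bar> = norm u * norm v * sin (vec_angle u v)"
proof -
  let ?A = "vec_angle u v"
  have "(cross2 u v)\<^sup>2 = (norm u * norm v)\<^sup>2 - (norm u * norm v * cos ?A)\<^sup>2"
    using cross2_sq_add_inner_sq[of u v] vec_angle_cos[OF assms] by (simp add: power_mult_distrib)
  also have "\<dots> = (norm u * norm v * sin ?A)\<^sup>2"
    unfolding sin_squared_eq power_mult_distrib by (simp add: right_diff_distrib)
  finally have "\<bar>cross2 u v\<bar> = \<bar>norm u * norm v * sin ?A\<bar>"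
    by (metis real_sqrt_abs)
  moreover have "sin ?A \<ge> 0" by (intro sin_ge_zero vec_angle_range)
  ultimately show ?thesis by simp
qed

lemma vec_angle_bounds:
  assumes "cross2 u v \<noteq> 0"
  shows "0 < vec_angle u v" "vec_angle u v < pi"
proof -
  have "u \<noteq> 0" "v \<noteq> 0" using assms by (auto simp: cross2_def)
  then have "sin (vec_angle u v) \<noteq> 0" using assms abs_cross2_eq_sin_vec_angle by fastforce
  then show "0 < vec_angle u v" "vec_angle u v < pi"
    using vec_angle_range[of u v] by (auto simp: less_le)
qed

lemma mem_double_coneI: "0 < a * b \<Longrightarrow> z + a *\<^sub>R u + b *\<^sub>R v \<in> double_cone z u v"
  unfolding double_cone_def zero_less_mult_iff by blast

lemma open_double_cone:
  assumes cross: "cross2 u v \<noteq> 0"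
  shows "open (double_cone z u v)"
proof -
  define f where "f x = x$1 *\<^sub>R u + x$2 *\<^sub>R v" for x :: "real^2"
  have "linear f"
    unfolding f_def by (intro linearI) (simp_all add: algebra_simps)
  moreover have "inj f"
  proof (rule injI)
    fix x y assume "f x = f y"
    then have "cross2 (f x) v = cross2 (f y) v" "cross2 u (f x) = cross2 u (f y)" by simp_all
    then show "x = y"
      using cross unfolding f_def cross2_scaleR_add_right cross2_scaleR_add_left
      by (simp add: vec_eq_iff forall_2)
  qed
  ultimately have "open (f ` {x. 0 < x$1 * x$2})"
    by (intro open_surjective_linear_image linear_inj_imp_surj open_Collect_less continuous_intros)
  moreover have "double_cone z u v = (\<lambda>y. z + y) ` f ` {x. 0 < x$1 * x$2}"
  proof (intro set_eqI iffI)
    fix y assume "y \<in> double_cone z u v"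
    then obtain a b where "y = z + f (vector [a, b])" "0 < a * b"
      unfolding double_cone_def f_def by (auto simp: zero_less_mult_iff add.assoc)
    then show "y \<in> (\<lambda>y. z + y) ` f ` {x. 0 < x$1 * x$2}" by auto
  next
    fix y assume "y \<in> (\<lambda>y. z + y) ` f ` {x. 0 < x$1 * x$2}"
    then obtain x :: "real^2" where "y = z + x$1 *\<^sub>R u + x$2 *\<^sub>R v" "0 < x$1 * x$2"
      unfolding f_def by (auto simp: add.assoc)
    then show "y \<in> double_cone z u v" using mem_double_coneI by blast
  qed
  ultimately show ?thesis by (simp add: open_translation)
qed

lemma sin_diff_sq_add_sin_sq:
  fixes A t :: real
  shows "(sin (A - t))\<^sup>2 + 2 * sin (A - t) * sin t * cos A + (sin t)\<^sup>2 = (sin A)\<^sup>2"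
  unfolding sin_diff using sin_cos_squared_add[of A] sin_cos_squared_add[of t] by algebra

definition cone_angles :: "real \<Rightarrow> real set" where
  "cone_angles A = {0<..<A} \<union> {pi<..<pi + A}"

lemma sin_cone_angles_pos:
  assumes "0 < A" "A < pi" "t \<in> cone_angles A"
  shows "0 < sin (A - t) * sin t"
proof -
  have "t - pi \<in> {0<..<A}" if "t \<in> {pi<..<pi + A}" using that by simp
  then have "sin (A - t) > 0 \<and> sin t > 0 \<or> sin (A - t) < 0 \<and> sin t < 0"
    using assms sin_gt_zero[of "A - t"] sin_gt_zero[of t]
      sin_gt_zero[of "A - (t - pi)"] sin_gt_zero[of "t - pi"]
    by (auto simp: sin_diff cone_angles_def)
  then show ?thesis by (auto simp: mult_neg_neg)
qed

text \<open>Spherical interpolation from \<^term>\<open>sgn u\<close> to \<^term>\<open>sgn v\<close>: the unit vector at angle \<open>t\<close>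
  from \<open>u\<close> towards \<open>v\<close>. For \<open>t \<in> (\<pi>, \<pi> + A)\<close> it points into the opposite half of the cone.\<close>
definition cone_direction :: "real^2 \<Rightarrow> real^2 \<Rightarrow> real \<Rightarrow> real^2" where
  "cone_direction u v t = (sin (vec_angle u v - t) *\<^sub>R sgn u + sin t *\<^sub>R sgn v) /\<^sub>R sin (vec_angle u v)"

lemma cone_direction_eq:
  "cone_direction u v t =
     (sin (vec_angle u v - t) / sin (vec_angle u v)) *\<^sub>R sgn u
   + (sin t / sin (vec_angle u v)) *\<^sub>R sgn v"
  unfolding cone_direction_def by (simp add: scaleR_add_right divide_inverse_commute)

lemma cone_direction_has_vector_derivative:
  "(cone_direction u v has_vector_derivative cone_direction u v (t + pi / 2)) (at t within X)"
  unfolding cone_direction_def[abs_def]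
  by (auto intro!: derivative_eq_intros simp: sin_diff cos_diff sin_add cos_add)

context
  fixes u v :: "real^2"
  assumes cross: "cross2 u v \<noteq> 0"
begin

private lemma nonzero: "u \<noteq> 0" "v \<noteq> 0"
  using cross by (auto simp: cross2_def)

private lemma sin_angle_pos: "0 < sin (vec_angle u v)"
  using vec_angle_bounds[OF cross] by (simp add: sin_gt_zero)

private lemma inner_sgn: "sgn u \<bullet> sgn v = cos (vec_angle u v)"
  using vec_angle_cos[OF nonzero] nonzero by (simp add: sgn_div_norm field_simps)

private lemma abs_cross2_sgn: "\<bar>cross2 (sgn u) (sgn v)\<bar> = sin (vec_angle u v)"
  using abs_cross2_eq_sin_vec_angle[OF nonzero] nonzero
  by (simp add: sgn_div_norm cross2_def field_simps abs_divide)

lemma norm_cone_direction: "norm (cone_direction u v t) = 1"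
proof -
  let ?A = "vec_angle u v"
  have "(norm (sin (?A - t) *\<^sub>R sgn u + sin t *\<^sub>R sgn v))\<^sup>2
      = (sin (?A - t))\<^sup>2 + 2 * sin (?A - t) * sin t * cos ?A + (sin t)\<^sup>2"
  proof -
    have "sgn u \<bullet> sgn u = 1" "sgn v \<bullet> sgn v = 1"
      using nonzero by (simp_all add: dot_square_norm norm_sgn)
    then show ?thesis
      unfolding power2_norm_eq_inner using inner_sgn
      by (simp add: inner_add_left inner_add_right inner_commute power2_eq_square algebra_simps)
  qed
  also have "\<dots> = (sin ?A)\<^sup>2" by (rule sin_diff_sq_add_sin_sq)
  finally show ?thesis
    using sin_angle_pos unfolding cone_direction_def by simp
qed

lemma abs_cross2_cone_direction_quarter_turn:
  "\<bar>cross2 (cone_direction u v t) (cone_direction u v (t + pi / 2))\<bar> = 1"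
proof -
  let ?A = "vec_angle u v"
  have quarter: "sin (?A - (t + pi / 2)) = - cos (?A - t)" "sin (t + pi / 2) = cos t"
    by (simp_all add: sin_add cos_add sin_diff cos_diff)
  have "cross2 (cone_direction u v t) (cone_direction u v (t + pi / 2))
      = (sin (?A - t) * cos t + sin t * cos (?A - t)) / (sin ?A)\<^sup>2 * cross2 (sgn u) (sgn v)"
    unfolding cone_direction_eq cross2_scaleR_add quarter
    by (simp add: power2_eq_square add_divide_distrib)
  also have "sin (?A - t) * cos t + sin t * cos (?A - t) = sin ?A"
    using sin_add[of "?A - t" t] by (simp add: mult.commute)
  finally show ?thesis
    using abs_cross2_sgn sin_angle_pos by (simp add: abs_mult power2_eq_square)
qed

lemma cone_direction_in_double_cone:
  assumes "t \<in> cone_angles (vec_angle u v)" "r \<noteq> 0"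
  shows "z + r *\<^sub>R cone_direction u v t \<in> double_cone z u v"
proof -
  let ?A = "vec_angle u v"
  let ?a = "r * sin (?A - t) / (sin ?A * norm u)" and ?b = "r * sin t / (sin ?A * norm v)"
  have coords: "r *\<^sub>R cone_direction u v t = ?a *\<^sub>R u + ?b *\<^sub>R v"
    unfolding cone_direction_eq sgn_div_norm by (simp add: scaleR_add_right divide_inverse ac_simps)
  have "0 < (r * r) * (sin (?A - t) * sin t)"
    using sin_cone_angles_pos[OF vec_angle_bounds[OF cross] assms(1)] assms(2)
    by (metis mult_pos_pos not_real_square_gt_zero)
  then have "0 < ?a * ?b"
    using sin_angle_pos nonzero by (simp add: field_simps)
  then show ?thesis
    using mem_double_coneI[of ?a ?b z u v] coords by (simp add: add.assoc)
qed

lemma inj_on_cone_direction: "inj_on (cone_direction u v) (cone_angles (vec_angle u v))"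
proof (rule inj_onI)
  fix s t assume s: "s \<in> cone_angles (vec_angle u v)" and t: "t \<in> cone_angles (vec_angle u v)"
    and eq: "cone_direction u v s = cone_direction u v t"
  let ?A = "vec_angle u v"
  have "cross2 (cone_direction u v s) (sgn v) = cross2 (cone_direction u v t) (sgn v)"
       "cross2 (sgn u) (cone_direction u v s) = cross2 (sgn u) (cone_direction u v t)"
    using eq by simp_all
  then have sin_eq: "sin (?A - s) = sin (?A - t)" "sin s = sin t"
    using abs_cross2_sgn sin_angle_pos
    unfolding cone_direction_eq cross2_scaleR_add_right cross2_scaleR_add_left by auto
  then have "cos s = cos t"
    using sin_angle_pos by (simp add: sin_diff)
  with sin_eq obtain k :: int where k: "s = t + 2 * pi * k"
    using sin_cos_eq_iff by metis
  have "s < 2 * pi" "t < 2 * pi" "0 < s" "0 < t"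
    using s t vec_angle_bounds[OF cross] by (auto simp: cone_angles_def)
  then have "\<bar>2 * pi * k\<bar> < 2 * pi" using k by linarith
  then have "k = 0" by (simp add: abs_mult)
  then show "s = t" using k by simp
qed

end

definition gauss_radius :: "real \<Rightarrow> real" where
  "gauss_radius s = sqrt (- ln (1 - s))"

lemma gauss_radius_pos: "0 < s \<Longrightarrow> s < 1 \<Longrightarrow> 0 < gauss_radius s"
  unfolding gauss_radius_def by simp

lemma exp_neg_gauss_radius_sq: "0 \<le> s \<Longrightarrow> s < 1 \<Longrightarrow> exp (- (gauss_radius s)\<^sup>2) = 1 - s"
  unfolding gauss_radius_def by simp

lemma gauss_radius_has_real_derivative:
  assumes "0 < s" "s < 1"
  shows "(gauss_radius has_real_derivative 1 / (2 * (1 - s) * gauss_radius s)) (at s)"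
  unfolding gauss_radius_def[abs_def] using assms
  by (auto intro!: derivative_eq_intros simp: divide_simps)

lemma has_absolute_integral_change_of_variables_scalar:
  fixes f :: "real^'n::{finite,wellorder} \<Rightarrow> real" and g :: "real^'n::_ \<Rightarrow> real^'n::_"
  assumes "S \<in> sets lebesgue"
    and "\<And>x. x \<in> S \<Longrightarrow> (g has_derivative g' x) (at x within S)"
    and "inj_on g S"
  shows "(\<lambda>x. \<bar>det (matrix (g' x))\<bar> * f (g x)) absolutely_integrable_on S \<and>
           integral S (\<lambda>x. \<bar>det (matrix (g' x))\<bar> * f (g x)) = b
     \<longleftrightarrow> f absolutely_integrable_on (g ` S) \<and> integral (g ` S) f = b"
  using has_absolute_integral_change_of_variables[OF assms, of "\<lambda>x. vec (f x) :: real^1" "vec b"]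
  by (simp add: absolutely_integrable_on_1_iff integral_on_1_eq vec_eq_iff)

definition cone_chart :: "real^2 \<Rightarrow> real^2 \<Rightarrow> real^2 \<Rightarrow> real^2 \<Rightarrow> real^2" where
  "cone_chart z u v p = z + gauss_radius (p$1) *\<^sub>R cone_direction u v (p$2)"

definition cone_chart_domain :: "real^2 \<Rightarrow> real^2 \<Rightarrow> (real^2) set" where
  "cone_chart_domain u v = {p. p$1 \<in> {0<..<1} \<and> p$2 \<in> cone_angles (vec_angle u v)}"

definition cone_chart_deriv :: "real^2 \<Rightarrow> real^2 \<Rightarrow> real^2 \<Rightarrow> real^2 \<Rightarrow> real^2" where
  "cone_chart_deriv u v p h =
     h$1 *\<^sub>R ((1 / (2 * (1 - p$1) * gauss_radius (p$1))) *\<^sub>R cone_direction u v (p$2))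
   + h$2 *\<^sub>R (gauss_radius (p$1) *\<^sub>R cone_direction u v (p$2 + pi / 2))"

lemma cone_chart_has_derivative:
  fixes p :: "real^2"
  assumes "0 < p$1" "p$1 < 1"
  shows "(cone_chart z u v has_derivative cone_chart_deriv u v p) (at p within X)"
proof -
  have nth: "((\<lambda>p::real^2. p$i) has_derivative (\<lambda>h. h$i)) (at p within X)" for i
    by (rule bounded_linear_imp_has_derivative) (rule bounded_linear_vec_nth)
  have radius: "((\<lambda>p. gauss_radius (p$1)) has_derivative
      (\<lambda>h. h$1 * (1 / (2 * (1 - p$1) * gauss_radius (p$1))))) (at p within X)"
    by (rule DERIV_compose_FDERIV[OF gauss_radius_has_real_derivative[OF assms] nth])
  have direction: "((\<lambda>p. cone_direction u v (p$2)) has_derivative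
      (\<lambda>h. h$2 *\<^sub>R cone_direction u v (p$2 + pi / 2))) (at p within X)"
    using has_derivative_compose[OF nth cone_direction_has_vector_derivative[unfolded has_vector_derivative_def]]
    by simp
  show ?thesis
    unfolding cone_chart_def[abs_def] cone_chart_deriv_def[abs_def]
    by (rule has_derivative_eq_rhs, (rule derivative_intros radius direction)+)
       (simp add: fun_eq_iff algebra_simps)
qed

lemma cone_chart_has_derivative_on_domain:
  "p \<in> cone_chart_domain u v
   \<Longrightarrow> (cone_chart z u v has_derivative cone_chart_deriv u v p) (at p within X)"
  by (intro cone_chart_has_derivative) (auto simp: cone_chart_domain_def)

lemma cone_chart_domain_eq:
  "cone_chart_domain u v = box (vector [0, 0]) (vector [1, vec_angle u v])
                         \<union> box (vector [0, pi]) (vector [1, pi + vec_angle u v])"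
  unfolding cone_chart_domain_def cone_angles_def by (auto simp: mem_box_cart forall_2)

lemma cone_chart_domain_lebesgue: "cone_chart_domain u v \<in> sets lebesgue"
  unfolding cone_chart_domain_eq by (intro sets.Un borel_open) simp_all

lemma cone_chart_image_lebesgue: "cone_chart z u v ` cone_chart_domain u v \<in> sets lebesgue"
  using cone_chart_domain_lebesgue
  by (rule differentiable_image_in_sets_lebesgue)
     (auto simp: differentiable_on_def intro: differentiableI cone_chart_has_derivative_on_domain)

context
  fixes u v :: "real^2"
  assumes cross: "cross2 u v \<noteq> 0"
begin

lemma abs_det_cone_chart_deriv:
  assumes "0 < p$1" "p$1 < 1"
  shows "\<bar>det (matrix (cone_chart_deriv u v p))\<bar> = 1 / (2 * (1 - p$1))"
  using assms gauss_radius_pos[OF assms] abs_cross2_cone_direction_quarter_turn[OF cross]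
  unfolding cone_chart_deriv_def[abs_def] det_matrix_columns_2 cross2_scaleR
  by (simp add: abs_mult)

lemma norm_cone_chart_sub:
  assumes "0 < p$1" "p$1 < 1"
  shows "norm (cone_chart z u v p - z) = gauss_radius (p$1)"
  using gauss_radius_pos[OF assms] norm_cone_direction[OF cross]
  unfolding cone_chart_def by simp

lemma cone_chart_image_subset: "cone_chart z u v ` cone_chart_domain u v \<subseteq> double_cone z u v"
proof clarify
  fix p assume "p \<in> cone_chart_domain u v"
  then have "p$2 \<in> cone_angles (vec_angle u v)" "gauss_radius (p$1) \<noteq> 0"
    using gauss_radius_pos[of "p$1"] unfolding cone_chart_domain_def by auto
  then show "cone_chart z u v p \<in> double_cone z u v"
    unfolding cone_chart_def by (rule cone_direction_in_double_cone[OF cross])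
qed

lemma inj_on_cone_chart: "inj_on (cone_chart z u v) (cone_chart_domain u v)"
proof (rule inj_onI)
  fix p q assume p: "p \<in> cone_chart_domain u v" and q: "q \<in> cone_chart_domain u v"
    and eq: "cone_chart z u v p = cone_chart z u v q"
  have p1: "0 < p$1" "p$1 < 1" and q1: "0 < q$1" "q$1 < 1"
    using p q unfolding cone_chart_domain_def by auto
  have "gauss_radius (p$1) = gauss_radius (q$1)"
    using norm_cone_chart_sub[OF p1, of z] norm_cone_chart_sub[OF q1, of z] eq by simp
  then have "exp (- (gauss_radius (p$1))\<^sup>2) = exp (- (gauss_radius (q$1))\<^sup>2)" by simp
  then have 1: "p$1 = q$1"
    using p1 q1 by (simp add: exp_neg_gauss_radius_sq)
  then have "cone_direction u v (p$2) = cone_direction u v (q$2)"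
    using eq gauss_radius_pos[OF p1] unfolding cone_chart_def by simp
  then have 2: "p$2 = q$2"
    using inj_on_cone_direction[OF cross] p q unfolding cone_chart_domain_def inj_on_def by blast
  show "p = q" using 1 2 by (simp add: vec_eq_iff forall_2)
qed

lemma has_integral_const_cone_chart_domain:
  fixes c :: real
  shows "((\<lambda>_. c) has_integral 2 * vec_angle u v * c) (cone_chart_domain u v)"
proof -
  let ?A = "vec_angle u v"
  have box: "((\<lambda>_. c) has_integral ?A * c) (box (vector [0, a]) (vector [1, a + ?A]) :: (real^2) set)"
    for a
  proof -
    have "vector [0, a] \<in> cbox (vector [0, a]) (vector [1, a + ?A] :: real^2)"
      using vec_angle_bounds[OF cross] by (simp add: mem_box_cart forall_2)
    then show ?thesis
      unfolding has_integral_open_interval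
      using has_integral_const[of c "vector [0, a]" "vector [1, a + ?A] :: real^2"]
      by (subst (asm) content_cbox_cart) (auto simp: UNIV_2)
  qed
  have "box (vector [0, 0]) (vector [1, ?A]) \<inter> box (vector [0, pi]) (vector [1, pi + ?A])
        = ({} :: (real^2) set)"
    using vec_angle_bounds[OF cross] by (auto simp: mem_box_cart forall_2)
  then have "negligible (box (vector [0, 0]) (vector [1, ?A])
          \<inter> box (vector [0, pi]) (vector [1, pi + ?A]) :: (real^2) set)"
    by simp
  then show ?thesis
    unfolding cone_chart_domain_eq using has_integral_Un[OF box[of 0] box[of pi]]
    by (simp add: add.commute mult.commute mult.left_commute)
qed

lemma gaussian_integral_cone_chart_image:
  "(\<lambda>x. exp (- (norm (x - z))\<^sup>2)) absolutely_integrable_on cone_chart z u v ` cone_chart_domain u v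
   \<and> integral (cone_chart z u v ` cone_chart_domain u v) (\<lambda>x. exp (- (norm (x - z))\<^sup>2))
       = vec_angle u v"
proof -
  let ?S = "cone_chart_domain u v"
  let ?J = "\<lambda>p. \<bar>det (matrix (cone_chart_deriv u v p))\<bar> * exp (- (norm (cone_chart z u v p - z))\<^sup>2)"
  have jacobian: "?J p = 1 / 2" if "p \<in> ?S" for p
  proof -
    have p: "0 < p$1" "p$1 < 1" using that by (auto simp: cone_chart_domain_def)
    then have "?J p = 1 / (2 * (1 - p$1)) * (1 - p$1)"
      by (simp only: abs_det_cone_chart_deriv norm_cone_chart_sub exp_neg_gauss_radius_sq less_imp_le)
    with p show ?thesis by simp
  qed
  have "((\<lambda>_. 1 / 2 :: real) has_integral vec_angle u v) ?S"
    using has_integral_const_cone_chart_domain[of "1 / 2"] by simp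
  then have J: "(?J has_integral vec_angle u v) ?S"
    by (subst has_integral_cong[OF jacobian])
  have "?J absolutely_integrable_on ?S"
    by (rule nonnegative_absolutely_integrable_1[OF has_integral_integrable[OF J]]) (simp add: jacobian)
  moreover have "integral ?S ?J = vec_angle u v"
    using J by (rule integral_unique)
  ultimately show ?thesis
    by (intro has_absolute_integral_change_of_variables_scalar[OF cone_chart_domain_lebesgue
          cone_chart_has_derivative_on_domain inj_on_cone_chart, THEN iffD1] conjI)
qed

end

definition gauss2_density :: "real^2 \<Rightarrow> real" where
  "gauss2_density x = exp (- (norm x)\<^sup>2 / 2) / (2 * pi)"

lemma gauss2_eq_density: "gauss2 = density lborel (\<lambda>x. ennreal (gauss2_density x))"
  unfolding gauss2_def gauss2_density_def ..

lemma gauss2_density_nonneg: "0 \<le> gauss2_density x"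
  by (simp add: gauss2_density_def)

lemma gauss2_density_borel [measurable]: "gauss2_density \<in> borel_measurable borel"
  unfolding gauss2_density_def by (intro borel_measurable_continuous_onI continuous_intros) auto

lemma gauss2_density_eq_prod:
  "gauss2_density x = (\<Prod>b\<in>Basis. std_normal_density (x \<bullet> b))"
proof -
  have "(\<Prod>b\<in>(Basis::(real^2) set). std_normal_density (x \<bullet> b))
      = (\<Prod>b\<in>(Basis::(real^2) set). 1 / sqrt (2 * pi) * exp (- (x \<bullet> b)\<^sup>2 / 2))"
    by (simp add: std_normal_density_def)
  also have "\<dots> = (1 / sqrt (2 * pi)) ^ 2 * (\<Prod>b\<in>(Basis::(real^2) set). exp (- (x \<bullet> b)\<^sup>2 / 2))"
    by (simp only: prod.distrib prod_constant DIM_cart DIM_real) simp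
  also have "(\<Prod>b\<in>(Basis::(real^2) set). exp (- (x \<bullet> b)\<^sup>2 / 2)) = exp (- (norm x)\<^sup>2 / 2)"
  proof -
    have "(norm x)\<^sup>2 = (\<Sum>b\<in>Basis. (x \<bullet> b)\<^sup>2)"
      unfolding power2_norm_eq_inner by (subst euclidean_inner) (simp add: power2_eq_square)
    then have "- (norm x)\<^sup>2 / 2 = (\<Sum>b\<in>Basis. - (x \<bullet> b)\<^sup>2 / 2)"
      by (simp add: sum_divide_distrib[symmetric] sum_negf)
    then show ?thesis by (simp add: exp_sum)
  qed
  finally show ?thesis by (simp add: gauss2_density_def power_divide)
qed

lemma nn_integral_gauss2_density: "(\<integral>\<^sup>+x. ennreal (gauss2_density x) \<partial>lborel) = 1"
proof -
  have std: "(\<integral>\<^sup>+x. ennreal (std_normal_density x) \<partial>lborel) = 1"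
    using prob_space.emeasure_space_1[OF prob_space_normal_density[of 1 0]]
    by (simp add: emeasure_density)
  have "(\<integral>\<^sup>+x. ennreal (gauss2_density x) \<partial>lborel)
      = (\<integral>\<^sup>+x. (\<Prod>b\<in>(Basis::(real^2) set). ennreal (std_normal_density (x \<bullet> b))) \<partial>lborel)"
    by (simp add: gauss2_density_eq_prod prod_ennreal normal_density_nonneg)
  also have "\<dots> = (\<Prod>b\<in>(Basis::(real^2) set). (\<integral>\<^sup>+x. ennreal (std_normal_density x) \<partial>lborel))"
    by (rule nn_integral_lborel_prod) auto
  finally show ?thesis by (simp add: std)
qed

lemma gauss2_density_absolutely_integrable: "gauss2_density absolutely_integrable_on UNIV"
  by (intro nonnegative_absolutely_integrable_1 nn_integral_integrable_on)
     (simp_all add: nn_integral_gauss2_density gauss2_density_nonneg)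

lemma measure_gauss2_eq_integral:
  assumes [measurable]: "C \<in> sets borel"
  shows "measure gauss2 C = integral C gauss2_density"
proof -
  have "(\<integral>\<^sup>+x\<in>C. ennreal (gauss2_density x) \<partial>lborel) \<le> (\<integral>\<^sup>+x. ennreal (gauss2_density x) \<partial>lborel)"
    by (intro nn_integral_mono) (auto simp: indicator_def)
  then have "(\<integral>\<^sup>+x\<in>C. ennreal (gauss2_density x) \<partial>lborel) < \<infinity>"
    using nn_integral_gauss2_density by (simp add: order_le_less_trans)
  then have "emeasure gauss2 C = ennreal (integral C gauss2_density)"
    unfolding gauss2_eq_density
    by (subst emeasure_density)
       (auto intro!: set_nn_integral_lborel_eq_integral gauss2_density_nonneg
             simp: set_borel_measurable_def)
  moreover have "gauss2_density absolutely_integrable_on C"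
    by (rule set_integrable_subset[OF gauss2_density_absolutely_integrable]) auto
  then have "0 \<le> integral C gauss2_density"
    by (intro integral_nonneg set_lebesgue_integral_eq_integral(1)) (simp_all add: gauss2_density_nonneg)
  ultimately show ?thesis by (simp add: measure_def)
qed

lemma gauss2_density_lower_bound:
  "exp (- (norm z)\<^sup>2) / (2 * pi) * exp (- (norm (x - z))\<^sup>2) \<le> gauss2_density x"
proof -
  have "(norm x)\<^sup>2 \<le> (norm z + norm (x - z))\<^sup>2"
    using norm_triangle_sub[of x z] by (simp add: power_mono)
  also have "\<dots> \<le> 2 * (norm z)\<^sup>2 + 2 * (norm (x - z))\<^sup>2"
    using sum_squares_bound[of "norm z" "norm (x - z)"] by (simp add: power2_sum)
  finally have "exp (- (norm z)\<^sup>2) * exp (- (norm (x - z))\<^sup>2) \<le> exp (- (norm x)\<^sup>2 / 2)"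
    by (simp add: exp_add[symmetric])
  then show ?thesis unfolding gauss2_density_def by (simp add: divide_right_mono)
qed

theorem lemma6:
  fixes z u v :: "real^2"
  assumes "independent {u, v}" and "u \<noteq> v"
  shows "measure gauss2 (double_cone z u v)
           \<ge> vec_angle u v / (2 * pi) * exp (- (norm z)\<^sup>2)"
proof -
  have cross: "cross2 u v \<noteq> 0" using assms by (rule cross2_nonzero_if_independent)
  let ?C = "double_cone z u v" and ?P = "cone_chart z u v ` cone_chart_domain u v"
  let ?c = "exp (- (norm z)\<^sup>2) / (2 * pi)" and ?g = "\<lambda>x. exp (- (norm (x - z))\<^sup>2)"
  have C: "?C \<in> sets borel" using open_double_cone[OF cross] by simp
  have g: "?g absolutely_integrable_on ?P" "integral ?P ?g = vec_angle u v"
    using gaussian_integral_cone_chart_image[OF cross] by auto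
  have density_P: "gauss2_density absolutely_integrable_on ?P"
    by (rule set_integrable_subset[OF gauss2_density_absolutely_integrable])
       (simp_all add: cone_chart_image_lebesgue)
  have density_C: "gauss2_density absolutely_integrable_on ?C"
    using C by (intro set_integrable_subset[OF gauss2_density_absolutely_integrable]) auto
  have "vec_angle u v / (2 * pi) * exp (- (norm z)\<^sup>2) = integral ?P (\<lambda>x. ?c * ?g x)"
    using g(2) by simp
  also have "\<dots> \<le> integral ?P gauss2_density"
    using g(1) density_P gauss2_density_lower_bound
    by (intro integral_le) (auto intro: integrable_on_cmult_left set_lebesgue_integral_eq_integral)
  also have "\<dots> \<le> integral ?C gauss2_density"
    using density_P density_C cone_chart_image_subset[OF cross] gauss2_density_nonneg
    by (intro integral_subset_le) (auto intro: set_lebesgue_integral_eq_integral)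
  also have "\<dots> = measure gauss2 ?C"
    using C by (simp add: measure_gauss2_eq_integral)
  finally show ?thesis .
qed

end
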